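(* Let $A$ be a commutative semiring and $\rho$ a maximal congruence on $A$. If $\rho=\rho_+$, then $\rho$ is a prime congruence.
   Context: Semirings are commutative with $0$ and $1\neq0$, $0a=0$; congruences are equivalence relations compatible with $+,\cdot$. A congruence $\rho\neq A\times A$ is maximal if any congruence $\tau$ with $\rho\subseteq\tau$ is $\rho$ or $A\times A$. Twisted product $(a,b)\ast(c,d)=(ac+bd,ad+bc)$; a congruence $\rho\ne A\times A$ is prime if $(a,b)\ast(c,d)\in\rho$ implies $(a,b)\in\rho$ or $(c,d)\in\rho$. $\rho_+=\{(a,b):(a+c,b+c)\in\rho$ for some $c\in A\}$. *)

theory Defs
  imports Main
begin

definition congruence :: "('a::comm_semiring_1 \<times> 'a) set \<Rightarrow> bool" where
  "congruence \<rho> \<longleftrightarrow> equiv UNIV \<rho> \<and>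
     (\<forall>a b c d. (a, b) \<in> \<rho> \<longrightarrow> (c, d) \<in> \<rho> \<longrightarrow> (a + c, b + d) \<in> \<rho>) \<and>
     (\<forall>a b c d. (a, b) \<in> \<rho> \<longrightarrow> (c, d) \<in> \<rho> \<longrightarrow> (a * c, b * d) \<in> \<rho>)"

definition maximal_congruence :: "('a::comm_semiring_1 \<times> 'a) set \<Rightarrow> bool" where
  "maximal_congruence \<rho> \<longleftrightarrow> congruence \<rho> \<and> \<rho> \<noteq> UNIV \<and>
     (\<forall>\<tau>. congruence \<tau> \<longrightarrow> \<rho> \<subseteq> \<tau> \<longrightarrow> \<tau> = \<rho> \<or> \<tau> = UNIV)"

definition twisted_prod :: "'a::comm_semiring_1 \<times> 'a \<Rightarrow> 'a \<times> 'a \<Rightarrow> 'a \<times> 'a" where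
  "twisted_prod p q = (fst p * fst q + snd p * snd q, fst p * snd q + snd p * fst q)"

definition prime_congruence :: "('a::comm_semiring_1 \<times> 'a) set \<Rightarrow> bool" where
  "prime_congruence \<rho> \<longleftrightarrow> congruence \<rho> \<and> \<rho> \<noteq> UNIV \<and>
     (\<forall>p q. twisted_prod p q \<in> \<rho> \<longrightarrow> p \<in> \<rho> \<or> q \<in> \<rho>)"

definition rho_plus :: "('a::comm_semiring_1 \<times> 'a) set \<Rightarrow> ('a \<times> 'a) set" where
  "rho_plus \<rho> = {(a, b). \<exists>c. (a + c, b + c) \<in> \<rho>}"

end

theory Submission
  imports Defs
begin

text \<open>For a fixed pair \<open>q\<close>, the pairs \<open>p\<close> with \<open>p \<ast> q \<in> \<rho>\<close> form a congruence containing \<open>\<rho>\<close>;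
  transitivity and multiplicativity of this relation rely on the cancellation law
  \<open>\<rho>\<^sub>+ \<subseteq> \<rho>\<close>. By maximality it is \<open>\<rho>\<close> or everything. In the first case \<open>p \<ast> q \<in> \<rho>\<close> forces
  \<open>p \<in> \<rho>\<close>; in the second it contains \<open>(1, 0)\<close>, so \<open>q = (1, 0) \<ast> q \<in> \<rho>\<close>.\<close>

lemma congruence_refl: "congruence \<rho> \<Longrightarrow> (a, a) \<in> \<rho>"
  unfolding congruence_def equiv_def refl_on_def by auto

lemma congruence_sym: "congruence \<rho> \<Longrightarrow> (a, b) \<in> \<rho> \<Longrightarrow> (b, a) \<in> \<rho>"
  unfolding congruence_def equiv_def sym_def by auto

lemma congruence_trans: "congruence \<rho> \<Longrightarrow> (a, b) \<in> \<rho> \<Longrightarrow> (b, c) \<in> \<rho> \<Longrightarrow> (a, c) \<in> \<rho>"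
  unfolding congruence_def equiv_def trans_def by blast

lemma congruence_add:
  "congruence \<rho> \<Longrightarrow> (a, b) \<in> \<rho> \<Longrightarrow> (c, d) \<in> \<rho> \<Longrightarrow> (a + c, b + d) \<in> \<rho>"
  unfolding congruence_def by blast

lemma congruence_mult:
  "congruence \<rho> \<Longrightarrow> (a, b) \<in> \<rho> \<Longrightarrow> (c, d) \<in> \<rho> \<Longrightarrow> (a * c, b * d) \<in> \<rho>"
  unfolding congruence_def by blast

lemma rho_plus_cancel: "rho_plus \<rho> \<subseteq> \<rho> \<Longrightarrow> (a + c, b + c) \<in> \<rho> \<Longrightarrow> (a, b) \<in> \<rho>"
  unfolding rho_plus_def by blast

definition twisted_colon :: "('a::comm_semiring_1 \<times> 'a) set \<Rightarrow> 'a \<times> 'a \<Rightarrow> ('a \<times> 'a) set" where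
  "twisted_colon \<rho> q = {p. twisted_prod p q \<in> \<rho>}"

lemma mem_twisted_colon:
  "((x, y) \<in> twisted_colon \<rho> (c, d)) \<longleftrightarrow> (x * c + y * d, x * d + y * c) \<in> \<rho>"
  by (simp add: twisted_colon_def twisted_prod_def)

lemma one_zero_mem_twisted_colon_iff: "((1, 0) \<in> twisted_colon \<rho> q) \<longleftrightarrow> q \<in> \<rho>"
  by (cases q) (simp add: mem_twisted_colon)

lemma subset_twisted_colon:
  assumes "congruence \<rho>"
  shows "\<rho> \<subseteq> twisted_colon \<rho> q"
proof (clarify)
  fix x y assume xy: "(x, y) \<in> \<rho>"
  obtain c d where q: "q = (c, d)" by fastforce
  have "(x * c + y * d, y * c + x * d) \<in> \<rho>"
    using assms xy congruence_sym[OF assms xy]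
    by (intro congruence_add congruence_mult congruence_refl)
  then show "(x, y) \<in> twisted_colon \<rho> q"
    by (simp add: q mem_twisted_colon add.commute)
qed

lemma congruence_twisted_colon:
  assumes cong: "congruence \<rho>" and cancel: "rho_plus \<rho> \<subseteq> \<rho>"
  shows "congruence (twisted_colon \<rho> q)"
proof -
  obtain c d where q: "q = (c, d)" by fastforce
  let ?\<tau> = "twisted_colon \<rho> q"
  have refl: "(x, x) \<in> ?\<tau>" for x
    using congruence_refl[OF cong] by (simp add: q mem_twisted_colon add.commute)
  have sym: "(y, x) \<in> ?\<tau>" if "(x, y) \<in> ?\<tau>" for x y
    using that congruence_sym[OF cong] by (simp add: q mem_twisted_colon add.commute)
  have trans: "(x, z) \<in> ?\<tau>" if "(x, y) \<in> ?\<tau>" "(y, z) \<in> ?\<tau>" for x y z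
  proof -
    have "(x*c + y*d + (y*c + z*d), x*d + y*c + (y*d + z*c)) \<in> \<rho>"
      using that by (simp add: q mem_twisted_colon congruence_add[OF cong])
    then have "((x*c + z*d) + (y*c + y*d), (x*d + z*c) + (y*c + y*d)) \<in> \<rho>"
      by (simp add: ac_simps)
    then show ?thesis
      using rho_plus_cancel[OF cancel] by (simp add: q mem_twisted_colon)
  qed
  have add: "(x + u, y + v) \<in> ?\<tau>" if "(x, y) \<in> ?\<tau>" "(u, v) \<in> ?\<tau>" for x y u v
    using congruence_add[OF cong that[simplified q mem_twisted_colon]]
    by (simp add: q mem_twisted_colon algebra_simps)
  have mult: "(x * u, y * v) \<in> ?\<tau>" if "(x, y) \<in> ?\<tau>" "(u, v) \<in> ?\<tau>" for x y u v
  proof -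
    have xy: "(x*c + y*d, x*d + y*c) \<in> \<rho>" and uv: "(u*c + v*d, u*d + v*c) \<in> \<rho>"
      using that by (simp_all add: q mem_twisted_colon)
    \<comment> \<open>multiply the first relation by \<open>u\<close>, the second by \<open>y\<close>, add, and cancel \<open>y u (c + d)\<close>\<close>
    have "((x*c + y*d)*u + y*(u*c + v*d), (x*d + y*c)*u + y*(u*d + v*c)) \<in> \<rho>"
      using congruence_add[OF cong congruence_mult[OF cong xy congruence_refl[OF cong]]
          congruence_mult[OF cong congruence_refl[OF cong] uv]] .
    then have "((x*u*c + y*v*d) + (y*u*d + y*u*c), (x*u*d + y*v*c) + (y*u*d + y*u*c)) \<in> \<rho>"
      by (simp add: algebra_simps)
    then show ?thesis
      using rho_plus_cancel[OF cancel] by (simp add: q mem_twisted_colon mult_ac)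
  qed
  have "equiv UNIV ?\<tau>"
    by (rule equivI) (auto intro: refl_onI symI transI refl sym trans)
  with add mult show ?thesis
    unfolding congruence_def by blast
qed

theorem proposition2p23:
  fixes \<rho> :: "('a::comm_semiring_1 \<times> 'a) set"
  assumes "maximal_congruence \<rho>"
    and "\<rho> = rho_plus \<rho>"
  shows "prime_congruence \<rho>"
proof -
  have cong: "congruence \<rho>" and proper: "\<rho> \<noteq> UNIV"
    and maximal: "\<And>\<tau>. congruence \<tau> \<Longrightarrow> \<rho> \<subseteq> \<tau> \<Longrightarrow> \<tau> = \<rho> \<or> \<tau> = UNIV"
    using assms(1) unfolding maximal_congruence_def by auto
  have "p \<in> \<rho> \<or> q \<in> \<rho>" if "twisted_prod p q \<in> \<rho>" for p q
  proof -
    have "p \<in> twisted_colon \<rho> q"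
      using that by (simp add: twisted_colon_def)
    moreover have "twisted_colon \<rho> q = \<rho> \<or> twisted_colon \<rho> q = UNIV"
      using assms(2) cong by (intro maximal congruence_twisted_colon subset_twisted_colon) auto
    ultimately show ?thesis
      using one_zero_mem_twisted_colon_iff by blast
  qed
  with cong proper show ?thesis
    unfolding prime_congruence_def by blast
qed

end
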